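(* Assume condition (ii): $k(0)=\alpha\in(2,\infty)$. Then there exist $c>0$ and $h_0>0$ such that $\inf_{|u|\le h^{-1}}|\varphi(u)|\ge c\,h^{\alpha}$ for all $h\in(0,h_0]$.
   Context: $\nu$ is a finite Borel measure on $(0,\infty)$ with $\int_{(2,\infty)}\log x\,\nu(dx)<\infty$ (the Lévy measure of a compound Poisson subordinator), $k(x)=\nu((x,\infty))$ for $x\ge0$, and $\varphi(t)=\exp\big(\int_0^\infty(e^{itx}-1)\frac{k(x)}{x}dx\big)$ is the characteristic function of the stationary distribution of the OU process $dX_t=-\lambda X_tdt+dJ_{\lambda t}$ driven by the compound Poisson process $J$ with Lévy measure $\nu$. *)

theory Defs
  imports "HOL-Analysis.Analysis"
begin

definition kfun :: "real measure \<Rightarrow> real \<Rightarrow> real" where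
  "kfun \<nu> x = measure \<nu> {x<..}"

definition phi :: "real measure \<Rightarrow> real \<Rightarrow> complex" where
  "phi \<nu> t = exp (\<integral>x\<in>{0<..}. (exp (\<i> * complex_of_real (t * x)) - 1)
                       * complex_of_real (kfun \<nu> x / x) \<partial>lborel)"

end

theory Submission imports Defs begin

text \<open>
  Write \<open>\<alpha> = k(0)\<close>. Since \<open>|\<phi>(u)| = exp (- \<integral>\<^sub>0\<^sup>\<infinity> (1 - cos (u x)) k(x)/x dx)\<close>, it suffices to bound
  this integral by \<open>\<alpha> ln |u| + O(1)\<close>. On \<open>(1, \<infinity>)\<close> we use \<open>1 - cos \<le> 2\<close> and the integrability
  of \<open>k(x)/x\<close> there, which is the log-moment condition. On \<open>(0, 1]\<close> we use \<open>k \<le> \<alpha>\<close> and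
  \<open>\<integral>\<^sub>0\<^sup>1 (1 - cos (U x))/x dx \<le> ln U + 4\<close>: the coefficient 1 of \<open>ln U\<close> matters, since it becomes
  the exponent \<open>\<alpha>\<close> in \<open>|\<phi>(u)| \<ge> c |u|\<^sup>-\<^sup>\<alpha>\<close>.
\<close>

lemma one_minus_cos_le: "1 - cos (t::real) \<le> t\<^sup>2 / 2"
proof -
  have "cos t = 1 - 2 * sin (t/2) ^ 2" using cos_double_sin[of "t/2"] by simp
  moreover have "sin (t/2)^2 \<le> (t/2)^2"
    using abs_sin_x_le_abs_x[of "t/2"] by (metis abs_ge_zero power2_abs power_mono)
  ultimately show ?thesis by (simp add: power_divide)
qed

lemma one_minus_cos_div_le_linear:
  fixes U x :: real assumes "0 < x"
  shows "(1 - cos (U*x)) / x \<le> U\<^sup>2 * x / 2"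
proof -
  have "(1 - cos (U*x)) / x \<le> ((U*x)\<^sup>2 / 2) / x"
    using one_minus_cos_le[of "U*x"] assms by (intro divide_right_mono) auto
  also have "\<dots> = U\<^sup>2 * x / 2" using assms by (simp add: power2_eq_square)
  finally show ?thesis .
qed

text \<open>
  Away from \<open>0\<close> we majorize \<open>(1 - cos (U x))/x\<close> by a function with an explicit antiderivative,
  so that the oscillating part \<open>cos (U x)/x\<close> only contributes \<open>O(1)\<close>.
\<close>

definition cos_majorant :: "real \<Rightarrow> real \<Rightarrow> real" where
  "cos_majorant U x = 1/x - cos (U*x)/x + (sin (U*x) + 1) / (U*x\<^sup>2)"

definition cos_majorant_antideriv :: "real \<Rightarrow> real \<Rightarrow> real" where
  "cos_majorant_antideriv U x = ln x - sin (U*x)/(U*x) - 1/(U*x)"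

lemma one_minus_cos_div_le_cos_majorant:
  fixes U x :: real assumes "0 < U" "0 < x"
  shows "(1 - cos (U*x)) / x \<le> cos_majorant U x"
proof -
  have "0 \<le> (sin (U*x) + 1) / (U*x\<^sup>2)"
    using sin_ge_minus_one[of "U*x"] assms by (intro divide_nonneg_pos) (linarith, auto)
  then show ?thesis unfolding cos_majorant_def by (simp add: diff_divide_distrib)
qed

lemma cos_majorant_antideriv_has_derivative:
  fixes U x :: real assumes "0 < U" "0 < x"
  shows "(cos_majorant_antideriv U has_real_derivative cos_majorant U x) (at x)"
proof -
  have "((\<lambda>x. ln x - sin (U*x)/(U*x) - 1/(U*x)) has_real_derivative
      (1/x - cos (U*x)/x + sin (U*x)/(U*x\<^sup>2) + 1/(U*x\<^sup>2))) (at x)"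
    using assms by (auto intro!: derivative_eq_intros simp: field_simps power2_eq_square)
  then show ?thesis
    unfolding cos_majorant_antideriv_def cos_majorant_def fun_eq_iff
    by (simp add: add_divide_distrib add.assoc)
qed

lemma nn_integral_cos_majorant:
  fixes U :: real assumes U: "1 \<le> U"
  shows "(\<integral>\<^sup>+ x. ennreal (cos_majorant U x) * indicator {1/U..1} x \<partial>lborel) \<le> ennreal (ln U + 3)"
proof -
  have Upos: "0 < U" using U by simp
  have "(\<integral>\<^sup>+ x. ennreal (cos_majorant U x) * indicator {1/U..1} x \<partial>lborel)
      = cos_majorant_antideriv U 1 - cos_majorant_antideriv U (1/U)"
  proof (rule nn_integral_FTC_Icc)
    show "cos_majorant U \<in> borel_measurable borel" unfolding cos_majorant_def by measurable
    fix x assume "x \<in> {1/U..1}"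
    then have x: "0 < x" using Upos by (auto intro: less_le_trans[of 0 "1/U"])
    show "(cos_majorant_antideriv U has_real_derivative cos_majorant U x) (at x)"
      using cos_majorant_antideriv_has_derivative[OF Upos x] .
    show "0 \<le> cos_majorant U x"
      using one_minus_cos_div_le_cos_majorant[OF Upos x] x
      by (smt (verit) cos_le_one divide_nonneg_pos)
  qed (use U in \<open>auto simp: field_simps\<close>)
  also have "cos_majorant_antideriv U 1 - cos_majorant_antideriv U (1/U) \<le> ln U + 3"
  proof -
    have "- sin U \<le> U" using U sin_ge_minus_one[of U] by linarith
    then have "- sin U / U \<le> 1" using Upos by (simp add: le_divide_eq)
    moreover have "cos_majorant_antideriv U 1 - cos_majorant_antideriv U (1/U)
        = ln U + sin 1 + 1 - sin U / U - 1/U"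
      using Upos by (simp add: cos_majorant_antideriv_def ln_div)
    moreover have "0 < 1/U" "sin 1 \<le> (1::real)" using Upos by auto
    ultimately show ?thesis by linarith
  qed
  finally show ?thesis by (simp add: ennreal_leI)
qed

lemma nn_integral_one_minus_cos_div_le_large:
  fixes U :: real assumes U: "1 \<le> U"
  shows "(\<integral>\<^sup>+ x. ennreal (indicator {0<..1} x * (1 - cos (U*x)) / x) \<partial>lborel) \<le> ennreal (ln U + 4)"
proof -
  have Upos: "0 < U" using U by simp
  have "(\<integral>\<^sup>+ x. ennreal (indicator {0<..1} x * (1 - cos (U*x)) / x) \<partial>lborel)
     \<le> (\<integral>\<^sup>+ x. ennreal (U\<^sup>2 * x / 2) * indicator {0..1/U} x
                 + ennreal (cos_majorant U x) * indicator {1/U..1} x \<partial>lborel)"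
  proof (intro nn_integral_mono)
    fix x :: real
    show "ennreal (indicator {0<..1} x * (1 - cos (U*x)) / x)
      \<le> ennreal (U\<^sup>2 * x / 2) * indicator {0..1/U} x + ennreal (cos_majorant U x) * indicator {1/U..1} x"
    proof (cases "0 < x \<and> x \<le> 1")
      case x: True
      show ?thesis
      proof (cases "x \<le> 1/U")
        case True
        then have "ennreal (indicator {0<..1} x * (1 - cos (U*x)) / x)
            \<le> ennreal (U\<^sup>2 * x / 2) * indicator {0..1/U} x"
          using one_minus_cos_div_le_linear[of x U] x by (simp add: indicator_def ennreal_leI)
        then show ?thesis by (rule order_trans) simp
      next
        case False
        then show ?thesis using one_minus_cos_div_le_cos_majorant[OF Upos, of x] x
          by (auto simp: indicator_def intro!: ennreal_leI)
      qed
    qed (auto simp: indicator_def)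
  qed
  also have "\<dots> = (\<integral>\<^sup>+ x. ennreal (U\<^sup>2 * x / 2) * indicator {0..1/U} x \<partial>lborel)
      + (\<integral>\<^sup>+ x. ennreal (cos_majorant U x) * indicator {1/U..1} x \<partial>lborel)"
    unfolding cos_majorant_def by (intro nn_integral_add) auto
  also have "(\<integral>\<^sup>+ x. ennreal (U\<^sup>2 * x / 2) * indicator {0..1/U} x \<partial>lborel)
      = U\<^sup>2 * (1/U)\<^sup>2 / 4 - U\<^sup>2 * 0\<^sup>2 / 4"
    using Upos by (intro nn_integral_FTC_Icc) (auto intro!: derivative_eq_intros simp: power2_eq_square)
  also have "\<dots> = ennreal (1/4)" using Upos by (simp add: power2_eq_square)
  also have "ennreal (1/4) + (\<integral>\<^sup>+ x. ennreal (cos_majorant U x) * indicator {1/U..1} x \<partial>lborel)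
      \<le> ennreal (1/4) + ennreal (ln U + 3)"
    using nn_integral_cos_majorant[OF U] by (rule add_left_mono)
  also have "\<dots> = ennreal (ln U + 13/4)"
    using U by (subst ennreal_plus[symmetric]) auto
  also have "\<dots> \<le> ennreal (ln U + 4)" by (rule ennreal_leI) simp
  finally show ?thesis .
qed

lemma nn_integral_one_minus_cos_div_le_small:
  fixes U :: real assumes U: "0 \<le> U" "U \<le> 1"
  shows "(\<integral>\<^sup>+ x. ennreal (indicator {0<..1} x * (1 - cos (U*x)) / x) \<partial>lborel) \<le> ennreal 4"
proof -
  have "(\<integral>\<^sup>+ x. ennreal (indicator {0<..1} x * (1 - cos (U*x)) / x) \<partial>lborel)
     \<le> (\<integral>\<^sup>+ x. ennreal (x / 2) * indicator {0..1} x \<partial>lborel)"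
  proof (intro nn_integral_mono)
    fix x :: real
    show "ennreal (indicator {0<..1} x * (1 - cos (U*x)) / x) \<le> ennreal (x / 2) * indicator {0..1} x"
    proof (cases "0 < x \<and> x \<le> 1")
      case True
      then have "(1 - cos (U*x)) / x \<le> x / 2"
        using one_minus_cos_div_le_linear[of x U] U
        by (smt (verit) divide_right_mono mult_left_le_one_le power_le_one zero_le_power2)
      with True show ?thesis by (simp add: indicator_def ennreal_leI)
    qed (auto simp: indicator_def)
  qed
  also have "\<dots> = ennreal (1\<^sup>2 / 4 - 0\<^sup>2 / 4)"
    by (intro nn_integral_FTC_Icc) (auto intro!: derivative_eq_intros simp: power2_eq_square)
  also have "\<dots> \<le> ennreal 4" by (intro ennreal_leI) auto
  finally show ?thesis .
qed

lemma nn_integral_one_minus_cos_div_le: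
  fixes U :: real assumes "0 \<le> U"
  shows "(\<integral>\<^sup>+ x. ennreal (indicator {0<..1} x * (1 - cos (U*x)) / x) \<partial>lborel)
    \<le> ennreal (ln (max 1 U) + 4)"
proof (cases "U \<le> 1")
  case True
  then have "max 1 U = 1" by simp
  then show ?thesis using nn_integral_one_minus_cos_div_le_small[OF assms True] by simp
next
  case False
  then show ?thesis using nn_integral_one_minus_cos_div_le_large[of U] by (simp add: max_def)
qed

lemma kfun_nonneg: "0 \<le> kfun \<nu> x"
  unfolding kfun_def by simp

lemma kfun_antimono:
  assumes "finite_measure \<nu>" "sets \<nu> = sets borel" "x \<le> y"
  shows "kfun \<nu> y \<le> kfun \<nu> x"
  unfolding kfun_def using assms by (intro finite_measure.finite_measure_mono) auto

lemma borel_measurable_kfun: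
  assumes "finite_measure \<nu>" "sets \<nu> = sets borel"
  shows "kfun \<nu> \<in> borel_measurable borel"
proof -
  have "(\<lambda>x. - kfun \<nu> x) \<in> borel_measurable borel"
    using kfun_antimono[OF assms] by (intro borel_measurable_mono) (auto simp: mono_def)
  then have "(\<lambda>x. - (- kfun \<nu> x)) \<in> borel_measurable borel" by measurable
  then show ?thesis by simp
qed

text \<open>By Tonelli, \<open>\<integral>\<^sub>1\<^sup>\<infinity> k(x)/x dx = \<integral> ln (max 1 y) \<nu>(dy)\<close>.\<close>

lemma nn_integral_kfun_div_tail_finite:
  assumes finite_nu: "finite_measure \<nu>" and sets_nu: "sets \<nu> = sets borel"
    and log_moment: "(\<integral>\<^sup>+ x. ennreal (indicator {2<..} x * ln x) \<partial>\<nu>) < \<infinity>"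
  shows "(\<integral>\<^sup>+ x. ennreal (indicator {1<..} x * kfun \<nu> x / x) \<partial>lborel) < \<infinity>"
proof -
  interpret finite_measure \<nu> by fact
  interpret P: pair_sigma_finite lborel \<nu>
    by (intro pair_sigma_finite.intro lborel.sigma_finite_measure_axioms sigma_finite_measure_axioms)
  define f where "f p = ennreal (indicator {1<..} (fst p) / fst p) * indicator {p. fst p < snd p} p"
    for p :: "real \<times> real"
  have f_measurable: "f \<in> borel_measurable (lborel \<Otimes>\<^sub>M \<nu>)"
  proof -
    have "f \<in> borel_measurable (lborel \<Otimes>\<^sub>M borel)" unfolding f_def by measurable
    then show ?thesis by (subst measurable_cong_sets[OF sets_pair_measure_cong[OF refl sets_nu] refl])
  qed
  have "(\<integral>\<^sup>+ x. ennreal (indicator {1<..} x * kfun \<nu> x / x) \<partial>lborel)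
      = (\<integral>\<^sup>+ x. (\<integral>\<^sup>+ y. f (x, y) \<partial>\<nu>) \<partial>lborel)"
  proof (rule nn_integral_cong)
    fix x :: real
    have "(\<integral>\<^sup>+ y. f (x, y) \<partial>\<nu>)
        = ennreal (indicator {1<..} x / x) * (\<integral>\<^sup>+ y. indicator {x<..} y \<partial>\<nu>)"
      unfolding f_def by (subst nn_integral_cmult[symmetric])
        (auto simp: indicator_def measurable_cong_sets[OF sets_nu refl] intro!: nn_integral_cong)
    also have "\<dots> = ennreal (indicator {1<..} x / x) * ennreal (kfun \<nu> x)"
      using sets_nu by (simp add: kfun_def emeasure_eq_measure)
    also have "\<dots> = ennreal (indicator {1<..} x * kfun \<nu> x / x)"
      by (auto simp: indicator_def ennreal_mult'[symmetric])
    finally show "ennreal (indicator {1<..} x * kfun \<nu> x / x) = (\<integral>\<^sup>+ y. f (x, y) \<partial>\<nu>)" ..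
  qed
  also have "\<dots> = (\<integral>\<^sup>+ y. (\<integral>\<^sup>+ x. f (x, y) \<partial>lborel) \<partial>\<nu>)"
    using P.Fubini[OF f_measurable] by simp
  also have "\<dots> \<le> (\<integral>\<^sup>+ y. ennreal (indicator {2<..} y * ln y) + ennreal (ln 2) \<partial>\<nu>)"
  proof (rule nn_integral_mono)
    fix y :: real
    have "(\<integral>\<^sup>+ x. f (x, y) \<partial>lborel) \<le> (\<integral>\<^sup>+ x. ennreal (1/x) * indicator {1..max 1 y} x \<partial>lborel)"
      by (intro nn_integral_mono) (auto simp: f_def indicator_def)
    also have "\<dots> = ennreal (ln (max 1 y) - ln 1)"
      by (intro nn_integral_FTC_Icc) (auto intro!: derivative_eq_intros)
    also have "\<dots> \<le> ennreal (indicator {2<..} y * ln y) + ennreal (ln 2)"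
    proof (cases "y > 2")
      case False
      then have "ln (max 1 y) - ln 1 \<le> ln 2" by (auto simp: max_def)
      with False show ?thesis by (auto simp: indicator_def intro!: ennreal_leI)
    qed (auto simp: indicator_def max_def)
    finally show "(\<integral>\<^sup>+ x. f (x, y) \<partial>lborel) \<le> ennreal (indicator {2<..} y * ln y) + ennreal (ln 2)" .
  qed
  also have "\<dots> = (\<integral>\<^sup>+ y. ennreal (indicator {2<..} y * ln y) \<partial>\<nu>) + (\<integral>\<^sup>+ y. ennreal (ln 2) \<partial>\<nu>)"
    by (intro nn_integral_add) (auto simp: measurable_cong_sets[OF sets_nu refl])
  also have "\<dots> < \<infinity>"
    using log_moment by (simp add: ennreal_mult_eq_top_iff emeasure_finite less_top[symmetric])
  finally show ?thesis .
qed

lemma one_minus_cos_kfun_div_le: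
  assumes "finite_measure \<nu>" "sets \<nu> = sets borel"
  shows "indicator {0<..} x * (1 - cos (u*x)) * kfun \<nu> x / x
    \<le> kfun \<nu> 0 * (indicator {0<..1} x * (1 - cos (\<bar>u\<bar>*x)) / x)
      + 2 * (indicator {1<..} x * kfun \<nu> x / x)"
proof (cases "0 < x")
  case x: True
  have cos_abs: "cos (u*x) = cos (\<bar>u\<bar>*x)" by (cases "0 \<le> u") auto
  have k: "0 \<le> kfun \<nu> x" "kfun \<nu> x \<le> kfun \<nu> 0"
    using kfun_nonneg kfun_antimono[OF assms, of 0 x] x by auto
  have c: "0 \<le> 1 - cos (\<bar>u\<bar>*x)" "1 - cos (\<bar>u\<bar>*x) \<le> 2"
    using cos_le_one[of "\<bar>u\<bar>*x"] cos_ge_minus_one[of "\<bar>u\<bar>*x"] by linarith+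
  show ?thesis
  proof (cases "x \<le> 1")
    case True
    have "(1 - cos (\<bar>u\<bar>*x)) * kfun \<nu> x \<le> (1 - cos (\<bar>u\<bar>*x)) * kfun \<nu> 0"
      using c k by (intro mult_left_mono) auto
    then have "(1 - cos (\<bar>u\<bar>*x)) * kfun \<nu> x / x \<le> kfun \<nu> 0 * (1 - cos (\<bar>u\<bar>*x)) / x"
      using x by (simp add: divide_right_mono mult.commute)
    with True x show ?thesis by (simp add: cos_abs indicator_def)
  next
    case False
    have "(1 - cos (\<bar>u\<bar>*x)) * kfun \<nu> x / x \<le> 2 * kfun \<nu> x / x"
      using c k x by (intro divide_right_mono mult_right_mono) auto
    with False x show ?thesis by (simp add: cos_abs indicator_def)
  qed
qed (simp add: indicator_def)

lemma nn_integral_one_minus_cos_kfun_div_le: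
  assumes "finite_measure \<nu>" "sets \<nu> = sets borel"
  shows "(\<integral>\<^sup>+ x. ennreal (indicator {0<..} x * (1 - cos (u*x)) * kfun \<nu> x / x) \<partial>lborel)
    \<le> ennreal (kfun \<nu> 0 * (ln (max 1 \<bar>u\<bar>) + 4))
      + 2 * (\<integral>\<^sup>+ x. ennreal (indicator {1<..} x * kfun \<nu> x / x) \<partial>lborel)"
proof -
  let ?\<alpha> = "kfun \<nu> 0"
  have [measurable]: "kfun \<nu> \<in> borel_measurable borel" using borel_measurable_kfun[OF assms] .
  have "(\<integral>\<^sup>+ x. ennreal (indicator {0<..} x * (1 - cos (u*x)) * kfun \<nu> x / x) \<partial>lborel)
      \<le> (\<integral>\<^sup>+ x. ennreal ?\<alpha> * ennreal (indicator {0<..1} x * (1 - cos (\<bar>u\<bar>*x)) / x)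
          + 2 * ennreal (indicator {1<..} x * kfun \<nu> x / x) \<partial>lborel)"
  proof (intro nn_integral_mono)
    fix x :: real
    define a where "a = indicator {0<..1} x * (1 - cos (\<bar>u\<bar>*x)) / x"
    define b where "b = indicator {1<..} x * kfun \<nu> x / x"
    have "0 \<le> a" "0 \<le> b" "0 \<le> ?\<alpha>"
      using kfun_nonneg[of \<nu>] unfolding a_def b_def by (auto simp: indicator_def)
    have "ennreal (indicator {0<..} x * (1 - cos (u*x)) * kfun \<nu> x / x) \<le> ennreal (?\<alpha> * a + 2 * b)"
      unfolding a_def b_def using one_minus_cos_kfun_div_le[OF assms, where u=u and x=x]
      by (rule ennreal_leI)
    also have "\<dots> = ennreal ?\<alpha> * ennreal a + 2 * ennreal b"
      using \<open>0 \<le> a\<close> \<open>0 \<le> b\<close> \<open>0 \<le> ?\<alpha>\<close> by (simp add: ennreal_plus ennreal_mult)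
    finally show "ennreal (indicator {0<..} x * (1 - cos (u*x)) * kfun \<nu> x / x)
        \<le> ennreal ?\<alpha> * ennreal (indicator {0<..1} x * (1 - cos (\<bar>u\<bar>*x)) / x)
          + 2 * ennreal (indicator {1<..} x * kfun \<nu> x / x)"
      unfolding a_def b_def .
  qed
  also have "\<dots> = ennreal ?\<alpha> * (\<integral>\<^sup>+ x. ennreal (indicator {0<..1} x * (1 - cos (\<bar>u\<bar>*x)) / x) \<partial>lborel)
      + 2 * (\<integral>\<^sup>+ x. ennreal (indicator {1<..} x * kfun \<nu> x / x) \<partial>lborel)"
    by (subst nn_integral_add) (auto simp: nn_integral_cmult)
  also have "\<dots> \<le> ennreal ?\<alpha> * ennreal (ln (max 1 \<bar>u\<bar>) + 4)
      + 2 * (\<integral>\<^sup>+ x. ennreal (indicator {1<..} x * kfun \<nu> x / x) \<partial>lborel)"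
    by (intro add_right_mono mult_left_mono nn_integral_one_minus_cos_div_le) auto
  also have "ennreal ?\<alpha> * ennreal (ln (max 1 \<bar>u\<bar>) + 4) = ennreal (?\<alpha> * (ln (max 1 \<bar>u\<bar>) + 4))"
    using kfun_nonneg[of \<nu> 0] by (simp add: ennreal_mult)
  finally show ?thesis .
qed

text \<open>
  If the integrand of \<open>phi\<close> is not Lebesgue integrable, the Bochner integral is \<open>0\<close> and
  \<open>phi \<nu> u = 1\<close>, which is why the lower bound needs no integrability hypothesis.
\<close>

lemma norm_phi_ge_exp:
  assumes k_measurable: "kfun \<nu> \<in> borel_measurable borel"
    and bound: "(\<integral>\<^sup>+ x. ennreal (indicator {0<..} x * (1 - cos (u*x)) * kfun \<nu> x / x) \<partial>lborel)
      \<le> ennreal B"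
    and "0 \<le> B"
  shows "exp (- B) \<le> cmod (phi \<nu> u)"
proof -
  define F where "F x = indicator {0<..} x *\<^sub>R ((exp (\<i> * complex_of_real (u * x)) - 1)
    * complex_of_real (kfun \<nu> x / x))" for x :: real
  define g where "g x = indicator {0<..} x * (1 - cos (u*x)) * kfun \<nu> x / x" for x :: real
  have phi_eq: "phi \<nu> u = exp (integral\<^sup>L lborel F)"
    unfolding phi_def F_def set_lebesgue_integral_def by simp
  show ?thesis
  proof (cases "integrable lborel F")
    case False
    then show ?thesis using \<open>0 \<le> B\<close> by (simp add: phi_eq not_integrable_integral_eq)
  next
    case True
    have Re_F: "Re (F x) = - g x" for x
      unfolding F_def g_def by (simp add: Re_exp indicator_def algebra_simps add_divide_distrib[symmetric])
    have "integral\<^sup>L lborel g \<le> B"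
      using bound \<open>0 \<le> B\<close> k_measurable kfun_nonneg[of \<nu>] unfolding g_def
      by (subst integral_eq_nn_integral)
        (auto simp: indicator_def intro!: enn2real_leI mult_nonneg_nonneg divide_nonneg_pos)
    moreover have "Re (integral\<^sup>L lborel F) = - integral\<^sup>L lborel g"
      using integral_Re[OF True] by (simp add: Re_F)
    ultimately show ?thesis by (simp add: phi_eq)
  qed
qed

lemma norm_phi_ge_powr:
  assumes "finite_measure \<nu>" "sets \<nu> = sets borel"
    and "(\<integral>\<^sup>+ x. ennreal (indicator {2<..} x * ln x) \<partial>\<nu>) < \<infinity>"
  shows "\<exists>c>0. \<forall>u. c * max 1 \<bar>u\<bar> powr (- kfun \<nu> 0) \<le> cmod (phi \<nu> u)"
proof -
  let ?\<alpha> = "kfun \<nu> 0"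
  obtain K where K: "(\<integral>\<^sup>+ x. ennreal (indicator {1<..} x * kfun \<nu> x / x) \<partial>lborel) = ennreal K"
    and "0 \<le> K"
    using nn_integral_kfun_div_tail_finite[OF assms] by (auto simp: less_top_ennreal)
  define c where "c = exp (- (4 * ?\<alpha> + 2 * K))"
  have "c * max 1 \<bar>u\<bar> powr (- ?\<alpha>) \<le> cmod (phi \<nu> u)" for u
  proof -
    let ?B = "?\<alpha> * (ln (max 1 \<bar>u\<bar>) + 4) + 2 * K"
    have "0 \<le> ?\<alpha> * (ln (max 1 \<bar>u\<bar>) + 4)" using kfun_nonneg[of \<nu> 0] by simp
    then have "ennreal (?\<alpha> * (ln (max 1 \<bar>u\<bar>) + 4)) + 2 * ennreal K = ennreal ?B"
      using \<open>0 \<le> K\<close> by (simp add: ennreal_plus ennreal_mult)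
    then have "exp (- ?B) \<le> cmod (phi \<nu> u)"
      using nn_integral_one_minus_cos_kfun_div_le[OF assms(1,2), of u] \<open>0 \<le> K\<close>
        \<open>0 \<le> ?\<alpha> * (ln (max 1 \<bar>u\<bar>) + 4)\<close>
      by (intro norm_phi_ge_exp borel_measurable_kfun[OF assms(1,2)]) (auto simp: K)
    moreover have "exp (- ?B) = c * exp (- ?\<alpha> * ln (max 1 \<bar>u\<bar>))"
      unfolding c_def by (simp add: exp_add[symmetric] algebra_simps)
    moreover have "max 1 \<bar>u\<bar> powr (- ?\<alpha>) = exp (- ?\<alpha> * ln (max 1 \<bar>u\<bar>))"
      by (simp add: powr_def mult.commute)
    ultimately show ?thesis by simp
  qed
  moreover have "c > 0" unfolding c_def by simp
  ultimately show ?thesis by blast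
qed

theorem lemmaL2:
  fixes \<nu> :: "real measure" and \<alpha> :: real
  assumes sets_nu: "sets \<nu> = sets borel"
    and finite_nu: "finite_measure \<nu>"
    and supp_nu: "emeasure \<nu> {..0} = 0"
    and log_moment: "(\<integral>\<^sup>+ x. ennreal (indicator {2<..} x * ln x) \<partial>\<nu>) < \<infinity>"
    and k0: "kfun \<nu> 0 = \<alpha>"
    and alpha_gt: "\<alpha> > 2"
  shows "\<exists>c>0. \<exists>h0>0. \<forall>h. 0 < h \<and> h \<le> h0 \<longrightarrow>
           Inf ((\<lambda>u. cmod (phi \<nu> u)) ` {u. \<bar>u\<bar> \<le> 1 / h}) \<ge> c * h powr \<alpha>"
proof -
  obtain c where "c > 0" and c: "\<And>u. c * max 1 \<bar>u\<bar> powr (- \<alpha>) \<le> cmod (phi \<nu> u)"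
    using norm_phi_ge_powr[OF finite_nu sets_nu log_moment] k0 by blast
  have "c * h powr \<alpha> \<le> Inf ((\<lambda>u. cmod (phi \<nu> u)) ` {u. \<bar>u\<bar> \<le> 1 / h})" if h: "0 < h" "h \<le> 1" for h
  proof (rule cInf_greatest)
    show "(\<lambda>u. cmod (phi \<nu> u)) ` {u. \<bar>u\<bar> \<le> 1 / h} \<noteq> {}" using h by (auto intro!: exI[of _ 0])
  next
    fix y assume "y \<in> (\<lambda>u. cmod (phi \<nu> u)) ` {u. \<bar>u\<bar> \<le> 1 / h}"
    then obtain u where u: "\<bar>u\<bar> \<le> 1/h" and y: "y = cmod (phi \<nu> u)" by auto
    have "h powr \<alpha> = (1/h) powr (- \<alpha>)" using h by (simp add: powr_minus_divide powr_divide)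
    also have "\<dots> \<le> max 1 \<bar>u\<bar> powr (- \<alpha>)"
      using u h kfun_nonneg[of \<nu> 0] k0 by (intro powr_mono2') (auto simp: max_def)
    finally have "c * h powr \<alpha> \<le> c * max 1 \<bar>u\<bar> powr (- \<alpha>)"
      using \<open>c > 0\<close> by (intro mult_left_mono) auto
    then show "c * h powr \<alpha> \<le> y" using c[of u] y by linarith
  qed
  then show ?thesis using \<open>c > 0\<close> by (intro exI[of _ c] conjI exI[of _ "1::real"]) auto
qed

end
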